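(* Consider the semi-discrete SBP-FDEC scheme for the two-dimensional transverse electric Maxwell equations on a periodic Cartesian grid described in the context, i.e. the linear ODE system $$\frac{d}{dt}\overline{E}^x=\Delta_y B,\qquad \frac{d}{dt}\overline{E}^y=-\Delta_x B,\qquad \hat M\,\frac{d}{dt}B=\Delta_x^T K^y\,\overline{E}^y-\Delta_y^T K^x\,\overline{E}^x .$$ Let a sequence of approximations $(\overline{E}^x_n,\overline{E}^y_n,B_n)$, $n=0,1,2,\dots$, at times $t_n$ be produced from initial data at $t_0$ either (i) by one-step updates of an arbitrary $s$-stage Runge–Kutta method applied to this ODE system, or (ii) by the Crank–Nicolson method $$\overline{E}^x_{n+1}-\overline{E}^x_n=\tfrac{\Delta t}{2}\Delta_y(B_{n+1}+B_n),\quad \overline{E}^y_{n+1}-\overline{E}^y_n=-\tfrac{\Delta t}{2}\Delta_x(B_{n+1}+B_n),$$ $$\hat M(B_{n+1}-B_n)=\tfrac{\Delta t}{2}\big(\Delta_x^TK^y(\overline{E}^y_{n+1}+\overline{E}^y_n)-\Delta_y^TK^x(\overline{E}^x_{n+1}+\overline{E}^x_n)\big).$$ Then in both cases the discrete divergence of the electric field is preserved exactly: $\operatorname{div}_h(\overline{E}^x_{n+1},\overline{E}^y_{n+1})=\operatorname{div}_h(\overline{E}^x_n,\overline{E}^y_n)$ for all $n$. In particular, if the discrete divergence is $0$ at $t_0$, it is $0$ at all time steps $t_n$.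
   Context: Setting. A one-dimensional diagonal-norm SBP finite difference operator on $N+1$ nodes is given by a derivative matrix $D\in\mathbb{R}^{(N+1)\times(N+1)}$ (with $D\mathbf{1}=0$ and rank $N$) and a norm matrix $M=\operatorname{diag}(\omega_0,\dots,\omega_N)$ with $\omega_i>0$, satisfying $MD+D^TM=\operatorname{diag}(-1,0,\dots,0,1)$. Define the histopolation Vandermonde matrix $V\in\mathbb{R}^{(N+1)\times N}$ by $V_{k,i}=-\sum_{j=0}^{i-1}D_{k,j}$ ($k=0,\dots,N$, $i=1,\dots,N$), and $\tilde\omega_0=\omega_0+\omega_N$, $\tilde\omega_i=\omega_i$ for $1\le i\le N-1$. The domain is a periodic rectangle partitioned into $m_x\times m_y$ congruent rectangular elements of size $\Delta x\times\Delta y$, each carrying the tensor grid of the reference operator; adjacent elements share boundary nodes. Let $n_x=m_xN$, $n_y=m_yN$. Global $x$-nodes are indexed by $p\in\mathbb{Z}_{n_x}$ (node $p=eN+i$ is local node $i\in\{0,\dots,N-1\}$ of $x$-element $e$); global $x$-edges are also indexed by $\mathbb{Z}_{n_x}$, edge $p$ being the sub-interval between nodes $p-1$ and $p$; similarly in $y$ with $\mathbb{Z}_{n_y}$. Indices are taken modulo $n_x$, $n_y$. Unknowns: $B=(B_{p,q})$ with $p$ an $x$-node and $q$ a $y$-node (nodal values of $B^z$); $\overline{E}^x=(\overline{E}^x_{p,q})$ with $p$ an $x$-node and $q$ a $y$-edge (line integrals of $E^x$); $\overline{E}^y=(\overline{E}^y_{p,q})$ with $p$ an $x$-edge and $q$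 a $y$-node. Difference operators: $(\Delta_yB)_{p,q}=B_{p,q}-B_{p,q-1}$, $(\Delta_xB)_{p,q}=B_{p,q}-B_{p-1,q}$; $\Delta_x^T,\Delta_y^T$ are their transposes with respect to the Euclidean inner products on these index sets. Discrete divergence (indexed by $x$-edge $p$, $y$-edge $q$): $\operatorname{div}_h(\overline{E}^x,\overline{E}^y)_{p,q}=\overline{E}^x_{p,q}-\overline{E}^x_{p-1,q}+\overline{E}^y_{p,q}-\overline{E}^y_{p,q-1}$. Mass matrices: $\hat M$ is diagonal with entry $\Delta x\Delta y\,\tilde\omega_{i}\tilde\omega_{j}$ at $(p,q)$, where $i,j$ are the local indices of $p,q$. $K^x$ is the symmetric matrix with $(\overline{E}^x)^TK^x\overline{E}^x=\frac{\Delta x}{\Delta y}\sum_{p}\sum_{f=0}^{m_y-1}\tilde\omega_{i(p)}\,e_{p,f}^TV^TMVe_{p,f}$, where $e_{p,f}=(\overline{E}^x_{p,fN+1},\dots,\overline{E}^x_{p,fN+N})^T$ and $i(p)$ is the local index of $p$; $K^y$ is defined analogously with the roles of $x$ and $y$ exchanged (factor $\frac{\Delta y}{\Delta x}$, histopolation in $x$, weights $\tilde\omega$ in $y$). *)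

theory Defs
  imports "Jordan_Normal_Form.DL_Rank"
begin

text \<open>Reference 1D diagonal-norm SBP operator: derivative matrix D (indices 0..N) and
  norm weights om (indices 0..N).  Matrices are represented as functions nat => nat => real.\<close>

definition Dmat :: "nat \<Rightarrow> (nat \<Rightarrow> nat \<Rightarrow> real) \<Rightarrow> real mat" where
  "Dmat N D = mat (N+1) (N+1) (\<lambda>(i,j). D i j)"

definition is_sbp :: "nat \<Rightarrow> (nat \<Rightarrow> nat \<Rightarrow> real) \<Rightarrow> (nat \<Rightarrow> real) \<Rightarrow> bool" where
  "is_sbp N D om \<longleftrightarrow>
     N \<ge> 1 \<and>
     (\<forall>k\<le>N. (\<Sum>j\<le>N. D k j) = 0) \<and>
     vec_space.rank (N+1) (Dmat N D) = N \<and>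
     (\<forall>i\<le>N. om i > 0) \<and>
     (\<forall>i\<le>N. \<forall>j\<le>N. om i * D i j + D j i * om j =
        (if i = j \<and> i = 0 then -1 else if i = j \<and> i = N then 1 else 0))"

definition Vh :: "(nat \<Rightarrow> nat \<Rightarrow> real) \<Rightarrow> nat \<Rightarrow> nat \<Rightarrow> real" where
  "Vh D k i = - (\<Sum>j<i. D k j)"

definition Gm :: "nat \<Rightarrow> (nat \<Rightarrow> nat \<Rightarrow> real) \<Rightarrow> (nat \<Rightarrow> real) \<Rightarrow> nat \<Rightarrow> nat \<Rightarrow> real" where
  "Gm N D om a b = (\<Sum>k\<le>N. Vh D k a * om k * Vh D k b)"

definition omt :: "nat \<Rightarrow> (nat \<Rightarrow> real) \<Rightarrow> nat \<Rightarrow> real" where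
  "omt N om i = (if i = 0 then om 0 + om N else om i)"

text \<open>Grid functions: nat => nat => real, only entries with p < n_x, q < n_y matter;
  all index arithmetic is modulo n_x resp. n_y.\<close>
type_synonym gridfun = "nat \<Rightarrow> nat \<Rightarrow> real"

definition prv :: "nat \<Rightarrow> nat \<Rightarrow> nat" where "prv n p = (p + n - 1) mod n"
definition nxt :: "nat \<Rightarrow> nat \<Rightarrow> nat" where "nxt n p = (p + 1) mod n"

text \<open>Local index of an edge p (edges of element f are fN+1,...,fN+N) and its element.\<close>
definition edge_loc :: "nat \<Rightarrow> nat \<Rightarrow> nat" where
  "edge_loc N p = (if p mod N = 0 then N else p mod N)"
definition edge_elt :: "nat \<Rightarrow> nat \<Rightarrow> nat \<Rightarrow> nat" where
  "edge_elt N n p = ((p + n - edge_loc N p) mod n) div N"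

definition Dy :: "nat \<Rightarrow> gridfun \<Rightarrow> gridfun" where
  "Dy ny B p q = B p q - B p (prv ny q)"
definition Dx :: "nat \<Rightarrow> gridfun \<Rightarrow> gridfun" where
  "Dx nx B p q = B p q - B (prv nx p) q"
definition DyT :: "nat \<Rightarrow> gridfun \<Rightarrow> gridfun" where
  "DyT ny v p q = v p q - v p (nxt ny q)"
definition DxT :: "nat \<Rightarrow> gridfun \<Rightarrow> gridfun" where
  "DxT nx w p q = w p q - w (nxt nx p) q"

definition divh :: "nat \<Rightarrow> nat \<Rightarrow> gridfun \<Rightarrow> gridfun \<Rightarrow> gridfun" where
  "divh nx ny Fx Fy p q = Fx p q - Fx (prv nx p) q + Fy p q - Fy p (prv ny q)"

definition Mhat :: "nat \<Rightarrow> (nat \<Rightarrow> real) \<Rightarrow> real \<Rightarrow> real \<Rightarrow> nat \<Rightarrow> nat \<Rightarrow> real" where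
  "Mhat N om dx dy p q = dx * dy * omt N om (p mod N) * omt N om (q mod N)"

definition Kx :: "nat \<Rightarrow> nat \<Rightarrow> (nat \<Rightarrow> nat \<Rightarrow> real) \<Rightarrow> (nat \<Rightarrow> real) \<Rightarrow> real \<Rightarrow> real
     \<Rightarrow> gridfun \<Rightarrow> gridfun" where
  "Kx N ny D om dx dy E p q = dx / dy * omt N om (p mod N) *
     (\<Sum>k=1..N. Gm N D om (edge_loc N q) k * E p ((edge_elt N ny q * N + k) mod ny))"

definition Ky :: "nat \<Rightarrow> nat \<Rightarrow> (nat \<Rightarrow> nat \<Rightarrow> real) \<Rightarrow> (nat \<Rightarrow> real) \<Rightarrow> real \<Rightarrow> real
     \<Rightarrow> gridfun \<Rightarrow> gridfun" where
  "Ky N nx D om dx dy E p q = dy / dx * omt N om (q mod N) *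
     (\<Sum>k=1..N. Gm N D om (edge_loc N p) k * E ((edge_elt N nx p * N + k) mod nx) q)"

definition rhsFx :: "nat \<Rightarrow> gridfun \<Rightarrow> gridfun" where
  "rhsFx ny B = Dy ny B"
definition rhsFy :: "nat \<Rightarrow> gridfun \<Rightarrow> gridfun" where
  "rhsFy nx B = (\<lambda>p q. - Dx nx B p q)"
definition rhsB :: "nat \<Rightarrow> nat \<Rightarrow> nat \<Rightarrow> (nat \<Rightarrow> nat \<Rightarrow> real) \<Rightarrow> (nat \<Rightarrow> real) \<Rightarrow> real \<Rightarrow> real
     \<Rightarrow> gridfun \<Rightarrow> gridfun \<Rightarrow> gridfun" where
  "rhsB N nx ny D om dx dy Fx Fy = (\<lambda>p q.
     (DxT nx (Ky N nx D om dx dy Fy) p q - DyT ny (Kx N ny D om dx dy Fx) p q)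
       / Mhat N om dx dy p q)"

text \<open>One step of size h of the s-stage Runge--Kutta method with coefficients a (s x s) and
  weights b applied to the ODE system, from (Fx,Fy,B) to (Fx',Fy',B'); the stage values
  (SFx i, SFy i, SB i), i < s, are any solution of the (possibly implicit) stage equations.\<close>
definition rk_step :: "nat \<Rightarrow> nat \<Rightarrow> nat \<Rightarrow> (nat \<Rightarrow> nat \<Rightarrow> real) \<Rightarrow> (nat \<Rightarrow> real) \<Rightarrow> real \<Rightarrow> real
     \<Rightarrow> nat \<Rightarrow> (nat \<Rightarrow> nat \<Rightarrow> real) \<Rightarrow> (nat \<Rightarrow> real) \<Rightarrow> real
     \<Rightarrow> gridfun \<Rightarrow> gridfun \<Rightarrow> gridfun \<Rightarrow> gridfun \<Rightarrow> gridfun \<Rightarrow> gridfun \<Rightarrow> bool" where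
  "rk_step N nx ny D om dx dy s a b h Fx Fy B Fx' Fy' B' \<longleftrightarrow>
    (\<exists>SFx SFy SB :: nat \<Rightarrow> gridfun.
      (\<forall>i<s. \<forall>p<nx. \<forall>q<ny.
         SFx i p q = Fx p q + h * (\<Sum>j<s. a i j * rhsFx ny (SB j) p q) \<and>
         SFy i p q = Fy p q + h * (\<Sum>j<s. a i j * rhsFy nx (SB j) p q) \<and>
         SB i p q = B p q + h * (\<Sum>j<s. a i j * rhsB N nx ny D om dx dy (SFx j) (SFy j) p q)) \<and>
      (\<forall>p<nx. \<forall>q<ny.
         Fx' p q = Fx p q + h * (\<Sum>i<s. b i * rhsFx ny (SB i) p q) \<and>
         Fy' p q = Fy p q + h * (\<Sum>i<s. b i * rhsFy nx (SB i) p q) \<and>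
         B' p q = B p q + h * (\<Sum>i<s. b i * rhsB N nx ny D om dx dy (SFx i) (SFy i) p q)))"

definition cn_step :: "nat \<Rightarrow> nat \<Rightarrow> nat \<Rightarrow> (nat \<Rightarrow> nat \<Rightarrow> real) \<Rightarrow> (nat \<Rightarrow> real) \<Rightarrow> real \<Rightarrow> real
     \<Rightarrow> real \<Rightarrow> gridfun \<Rightarrow> gridfun \<Rightarrow> gridfun \<Rightarrow> gridfun \<Rightarrow> gridfun \<Rightarrow> gridfun \<Rightarrow> bool" where
  "cn_step N nx ny D om dx dy h Fx Fy B Fx' Fy' B' \<longleftrightarrow>
    (\<forall>p<nx. \<forall>q<ny.
       Fx' p q - Fx p q = h / 2 * Dy ny (\<lambda>p q. B' p q + B p q) p q \<and>
       Fy' p q - Fy p q = - (h / 2) * Dx nx (\<lambda>p q. B' p q + B p q) p q \<and>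
       Mhat N om dx dy p q * (B' p q - B p q) =
         h / 2 * (DxT nx (Ky N nx D om dx dy (\<lambda>p q. Fy' p q + Fy p q)) p q
                - DyT ny (Kx N ny D om dx dy (\<lambda>p q. Fx' p q + Fx p q)) p q))"

end

theory Submission
  imports Defs
begin

(* Both time integrators update the electric field by a discrete curl (Dy g, -Dx g) of some
   grid function g (a weighted sum of the Runge-Kutta stage values of B, resp. the average of
   B_n and B_(n+1)), and divh annihilates discrete curls because the difference operators in x
   and y commute.  Neither the SBP property nor the mass matrices enter: only the shape of the
   equations for the electric field matters. *)

definition is_curl_update :: "nat \<Rightarrow> nat \<Rightarrow> gridfun \<Rightarrow> gridfun \<Rightarrow> gridfun \<Rightarrow> gridfun
     \<Rightarrow> gridfun \<Rightarrow> bool" where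
  "is_curl_update nx ny Fx Fy Fx' Fy' g \<longleftrightarrow>
    (\<forall>p<nx. \<forall>q<ny. Fx' p q = Fx p q + Dy ny g p q \<and> Fy' p q = Fy p q - Dx nx g p q)"

lemma prv_less: "0 < n \<Longrightarrow> prv n p < n"
  unfolding prv_def by simp

lemma divh_discrete_curl: "divh nx ny (Dy ny g) (\<lambda>p q. - Dx nx g p q) p q = 0"
  unfolding divh_def Dx_def Dy_def by simp

lemma divh_add:
  "divh nx ny (\<lambda>p q. Fx p q + Gx p q) (\<lambda>p q. Fy p q + Gy p q) p q
     = divh nx ny Fx Fy p q + divh nx ny Gx Gy p q"
  unfolding divh_def by simp

lemma divh_cong:
  assumes "0 < nx" "0 < ny" "p < nx" "q < ny"
    and "\<And>p q. p < nx \<Longrightarrow> q < ny \<Longrightarrow> Fx p q = Gx p q"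
    and "\<And>p q. p < nx \<Longrightarrow> q < ny \<Longrightarrow> Fy p q = Gy p q"
  shows "divh nx ny Fx Fy p q = divh nx ny Gx Gy p q"
  using assms prv_less[of nx p] prv_less[of ny q] unfolding divh_def by simp

lemma divh_curl_update:
  assumes "is_curl_update nx ny Fx Fy Fx' Fy' g"
    and "0 < nx" "0 < ny" "p < nx" "q < ny"
  shows "divh nx ny Fx' Fy' p q = divh nx ny Fx Fy p q"
proof -
  have "divh nx ny Fx' Fy' p q
      = divh nx ny (\<lambda>p q. Fx p q + Dy ny g p q) (\<lambda>p q. Fy p q + - Dx nx g p q) p q"
    using assms by (intro divh_cong) (auto simp: is_curl_update_def)
  also have "\<dots> = divh nx ny Fx Fy p q"
    by (simp only: divh_add divh_discrete_curl)
  finally show ?thesis .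
qed

lemma Dy_scaled_sum:
  "Dy ny (\<lambda>p q. c * (\<Sum>i<s. b i * S i p q)) p q = c * (\<Sum>i<s. b i * Dy ny (S i) p q)"
  unfolding Dy_def by (simp add: right_diff_distrib sum_subtractf)

lemma Dx_scaled_sum:
  "Dx nx (\<lambda>p q. c * (\<Sum>i<s. b i * S i p q)) p q = c * (\<Sum>i<s. b i * Dx nx (S i) p q)"
  unfolding Dx_def by (simp add: right_diff_distrib sum_subtractf)

lemma rk_step_curl_update:
  assumes "rk_step N nx ny D om dx dy s a b h Fx Fy B Fx' Fy' B'"
  obtains g where "is_curl_update nx ny Fx Fy Fx' Fy' g"
proof -
  from assms obtain SB :: "nat \<Rightarrow> gridfun" where
    "\<forall>p<nx. \<forall>q<ny.
       Fx' p q = Fx p q + h * (\<Sum>i<s. b i * rhsFx ny (SB i) p q) \<and>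
       Fy' p q = Fy p q + h * (\<Sum>i<s. b i * rhsFy nx (SB i) p q)"
    unfolding rk_step_def by blast
  then have "is_curl_update nx ny Fx Fy Fx' Fy' (\<lambda>p q. h * (\<Sum>i<s. b i * SB i p q))"
    unfolding is_curl_update_def Dy_scaled_sum Dx_scaled_sum rhsFx_def rhsFy_def
    by (simp add: sum_negf)
  then show thesis by (rule that)
qed

lemma cn_step_curl_update:
  assumes "cn_step N nx ny D om dx dy h Fx Fy B Fx' Fy' B'"
  shows "is_curl_update nx ny Fx Fy Fx' Fy' (\<lambda>p q. h / 2 * (B' p q + B p q))"
  using assms unfolding cn_step_def is_curl_update_def Dx_def Dy_def
  by (simp add: algebra_simps)

theorem mainTheorem1:
  fixes N mx my :: nat and dx dy :: real
    and D :: "nat \<Rightarrow> nat \<Rightarrow> real" and om :: "nat \<Rightarrow> real"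
    and s :: nat and a :: "nat \<Rightarrow> nat \<Rightarrow> real" and b :: "nat \<Rightarrow> real"
    and dt :: "nat \<Rightarrow> real"
    and Fx Fy B :: "nat \<Rightarrow> nat \<Rightarrow> nat \<Rightarrow> real"
  assumes sbp: "is_sbp N D om"
    and mx: "mx \<ge> 1" and my: "my \<ge> 1"
    and dx: "dx > 0" and dy: "dy > 0"
    and scheme:
      "(\<forall>n. rk_step N (mx * N) (my * N) D om dx dy s a b (dt n)
               (Fx n) (Fy n) (B n) (Fx (Suc n)) (Fy (Suc n)) (B (Suc n)))
       \<or> (\<forall>n. cn_step N (mx * N) (my * N) D om dx dy (dt n)
               (Fx n) (Fy n) (B n) (Fx (Suc n)) (Fy (Suc n)) (B (Suc n)))"
  shows "(\<forall>n. \<forall>p < mx * N. \<forall>q < my * N.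
            divh (mx * N) (my * N) (Fx (Suc n)) (Fy (Suc n)) p q
              = divh (mx * N) (my * N) (Fx n) (Fy n) p q)
         \<and> ((\<forall>p < mx * N. \<forall>q < my * N. divh (mx * N) (my * N) (Fx 0) (Fy 0) p q = 0)
              \<longrightarrow> (\<forall>n. \<forall>p < mx * N. \<forall>q < my * N. divh (mx * N) (my * N) (Fx n) (Fy n) p q = 0))"
proof -
  have "N \<ge> 1" using sbp unfolding is_sbp_def by simp
  then have grid: "0 < mx * N" "0 < my * N" using mx my by simp_all
  have "\<exists>g. is_curl_update (mx * N) (my * N) (Fx n) (Fy n) (Fx (Suc n)) (Fy (Suc n)) g" for n
    using scheme rk_step_curl_update cn_step_curl_update by metis
  then have step: "divh (mx * N) (my * N) (Fx (Suc n)) (Fy (Suc n)) p q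
                     = divh (mx * N) (my * N) (Fx n) (Fy n) p q"
    if "p < mx * N" "q < my * N" for n p q
    using divh_curl_update grid that by metis
  have conserved: "divh (mx * N) (my * N) (Fx n) (Fy n) p q
                     = divh (mx * N) (my * N) (Fx 0) (Fy 0) p q"
    if "p < mx * N" "q < my * N" for n p q
    using that by (induction n) (simp_all add: step)
  show ?thesis
  proof (intro conjI allI impI)
    show "divh (mx * N) (my * N) (Fx n) (Fy n) p q = 0"
      if "\<forall>p < mx * N. \<forall>q < my * N. divh (mx * N) (my * N) (Fx 0) (Fy 0) p q = 0"
        and "p < mx * N" "q < my * N" for n p q
      using that by (subst conserved) auto
  qed (use step in auto)
qed

end
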